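(* The north pole (resp. south pole) of the shape sphere $M^\ast$, i.e. the geometric center of the hemisphere $M^\ast_+$ of positively oriented shapes (resp. $M^\ast_-$ of negatively oriented shapes), is the shape of the positively (resp. negatively) oriented m-triangle with $I=1$ whose individual moments of inertia equal the dual masses: $I_j=\frac12(1-m_j)$, $j=1,2,3$.
   Context: Masses $m_1,m_2,m_3>0$, $m_1+m_2+m_3=1$; m-triangles $(\mathbf a_1,\mathbf a_2,\mathbf a_3)$, $\mathbf a_i\in\mathbb R^3$, $\sum m_i\mathbf a_i=0$, with $I_j=m_j|\mathbf a_j|^2$ and $I=\sum I_j$. Oriented m-triangles carry a unit normal $\mathbf n$; a nondegenerate one is positively oriented if $(\mathbf a_1,\mathbf a_2,\mathbf n)$ is right-handed. The shape space $M^\ast$ (oriented m-triangles with $I=1$ modulo rotation), with the kinematic metric induced from $\sum m_i|d\mathbf a_i|^2$ via lifts of zero angular momentum, is a round sphere of radius $1/2$, divided by the equator of collinear shapes into the closed hemispheres $M^\ast_\pm$ of positively and negatively oriented shapes. *)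

theory Defs
  imports "HOL-Analysis.Analysis" "HOL-Analysis.Cross3"
begin

definition admissible_masses :: "(nat \<Rightarrow> real) \<Rightarrow> bool" where
  "admissible_masses m \<longleftrightarrow> (\<forall>j\<in>{1..3}. m j > 0) \<and> (\<Sum>j\<in>{1..3}. m j) = 1"

definition m_triangle :: "(nat \<Rightarrow> real) \<Rightarrow> (nat \<Rightarrow> real^3) \<Rightarrow> bool" where
  "m_triangle m a \<longleftrightarrow> (\<Sum>j\<in>{1..3}. m j *\<^sub>R a j) = 0"

definition moment :: "(nat \<Rightarrow> real) \<Rightarrow> (nat \<Rightarrow> real^3) \<Rightarrow> nat \<Rightarrow> real" where
  "moment m a j = m j * (norm (a j))^2"

definition total_moment :: "(nat \<Rightarrow> real) \<Rightarrow> (nat \<Rightarrow> real^3) \<Rightarrow> real" where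
  "total_moment m a = (\<Sum>j\<in>{1..3}. moment m a j)"

definition oriented_m_triangle :: "(nat \<Rightarrow> real) \<Rightarrow> (nat \<Rightarrow> real^3) \<Rightarrow> real^3 \<Rightarrow> bool" where
  "oriented_m_triangle m a n \<longleftrightarrow> m_triangle m a \<and> norm n = 1 \<and> (\<forall>j\<in>{1..3}. a j \<bullet> n = 0)"

text \<open>Positively / negatively oriented: (a1,a2,n) right- / left-handed (implies nondegenerate).\<close>
definition pos_oriented :: "(nat \<Rightarrow> real) \<Rightarrow> (nat \<Rightarrow> real^3) \<Rightarrow> real^3 \<Rightarrow> bool" where
  "pos_oriented m a n \<longleftrightarrow> oriented_m_triangle m a n \<and> (cross3 (a 1) (a 2)) \<bullet> n > 0"

definition neg_oriented :: "(nat \<Rightarrow> real) \<Rightarrow> (nat \<Rightarrow> real^3) \<Rightarrow> real^3 \<Rightarrow> bool" where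
  "neg_oriented m a n \<longleftrightarrow> oriented_m_triangle m a n \<and> (cross3 (a 1) (a 2)) \<bullet> n < 0"

definition collinear_m_triangle :: "(nat \<Rightarrow> real) \<Rightarrow> (nat \<Rightarrow> real^3) \<Rightarrow> bool" where
  "collinear_m_triangle m a \<longleftrightarrow> m_triangle m a \<and> (\<exists>u. \<forall>j\<in>{1..3}. \<exists>t. a j = t *\<^sub>R u)"

definition rotations :: "(real^3^3) set" where
  "rotations = {R. orthogonal_matrix R \<and> det R = 1}"

text \<open>Kinematic distance in shape space between (shapes of) m-triangles with I = 1:
  the quotient by rotations of the great-circle distance on the unit sphere
  I = 1 for the mass inner product.\<close>
definition shape_dist :: "(nat \<Rightarrow> real) \<Rightarrow> (nat \<Rightarrow> real^3) \<Rightarrow> (nat \<Rightarrow> real^3) \<Rightarrow> real" where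
  "shape_dist m a b =
     arccos (SUP R\<in>rotations. (\<Sum>j\<in>{1..3}. m j * (a j \<bullet> (R *v b j))))"

text \<open>The shape of an oriented m-triangle with I = 1 is the geometric centre of its
  (closed) hemisphere iff it lies at distance pi/4 (a quarter great circle of the
  sphere of radius 1/2) from every shape on the equator of collinear shapes.\<close>
definition hemisphere_center :: "(nat \<Rightarrow> real) \<Rightarrow> (nat \<Rightarrow> real^3) \<Rightarrow> bool" where
  "hemisphere_center m a \<longleftrightarrow> total_moment m a = 1 \<and>
     (\<forall>b. collinear_m_triangle m b \<and> total_moment m b = 1 \<longrightarrow> shape_dist m a b = pi / 4)"

end

(*
  For a collinear shape b_j = t_j u the supremum over rotations in the kinematic distance is
  |u| |sum_j m_j t_j a_j|, so a is the centre of its hemisphere iff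
  |sum_j m_j t_j a_j|^2 = (sum_j m_j t_j^2) / 2 for all weights t with sum_j m_j t_j = 0.
  The weights t_j = [j = i] - m_i turn this into m_i |a_i|^2 = (1 - m_i) / 2.  Conversely,
  these moments together with sum_j m_j a_j = 0 force a_i . a_j = -1/2 for i <> j, and
  then the identity holds for all t.  A triangle with these moments is
  a_j = (e_j / sqrt m_j - s) / sqrt 2 with s = (sqrt m_1, sqrt m_2, sqrt m_3); its normal is +s
  or -s, according to the orientation.
*)
theory Submission
  imports Defs
begin

lemma sum_1_to_3: "(\<Sum>j\<in>{1..3::nat}. f j) = f 1 + f 2 + f 3"
proof -
  have "{1..3::nat} = {1, 2, 3}" by auto
  then show ?thesis by (simp add: add.assoc)
qed

lemma admissible_massesD:
  assumes "admissible_masses m"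
  shows "m 1 > 0" "m 2 > 0" "m 3 > 0" "m 1 + m 2 + m 3 = 1"
  using assms unfolding admissible_masses_def sum_1_to_3 by auto

lemma norm_rotation_mult: "R \<in> rotations \<Longrightarrow> norm (R *v u) = norm u"
  by (simp add: rotations_def orthogonal_transformation_matrix orthogonal_transformation_norm)

lemma Sup_rotations_inner:
  fixes u v :: "real^3"
  shows "(SUP R\<in>rotations. v \<bullet> (R *v u)) = norm v * norm u"
proof (rule cSup_eq_maximum)
  show "x \<le> norm v * norm u" if "x \<in> (\<lambda>R. v \<bullet> (R *v u)) ` rotations" for x
  proof -
    from that obtain R where "R \<in> rotations" "x = v \<bullet> (R *v u)" by blast
    then show ?thesis using norm_cauchy_schwarz[of v "R *v u"] by (simp add: norm_rotation_mult)
  qed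
  show "norm v * norm u \<in> (\<lambda>R. v \<bullet> (R *v u)) ` rotations"
  proof (cases "v = 0")
    case True
    have "mat 1 \<in> rotations"
      by (simp add: rotations_def orthogonal_matrix_id)
    with True show ?thesis by force
  next
    case False
    obtain f where f: "orthogonal_transformation f" "det (matrix f) = 1"
      "f u = (norm u / norm v) *\<^sub>R v"
      using rotation_exists[of u "(norm u / norm v) *\<^sub>R v"] False by force
    then have "matrix f \<in> rotations" "matrix f *v u = (norm u / norm v) *\<^sub>R v"
      by (auto simp: rotations_def orthogonal_transformation_matrix orthogonal_transformation_linear)
    moreover have "v \<bullet> ((norm u / norm v) *\<^sub>R v) = norm v * norm u"
      using False by (simp add: power2_norm_eq_inner[symmetric] power2_eq_square)
    ultimately show ?thesis by (metis image_eqI)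
  qed
qed

definition mass_combination ::
    "(nat \<Rightarrow> real) \<Rightarrow> (nat \<Rightarrow> real^3) \<Rightarrow> (nat \<Rightarrow> real) \<Rightarrow> real^3"
  where "mass_combination m a t = (\<Sum>j\<in>{1..3}. (m j * t j) *\<^sub>R a j)"

lemma mass_combination_scale:
  "mass_combination m a (\<lambda>j. c * t j) = c *\<^sub>R mass_combination m a t"
  by (simp add: mass_combination_def scaleR_sum_right mult.left_commute)

lemma shape_dist_collinear:
  assumes "\<forall>j\<in>{1..3}. b j = t j *\<^sub>R u"
  shows "shape_dist m a b = arccos (norm (mass_combination m a t) * norm u)"
proof -
  have "(\<Sum>j\<in>{1..3}. m j * (a j \<bullet> (R *v b j))) = mass_combination m a t \<bullet> (R *v u)" for R
    using assms by (simp add: mass_combination_def inner_sum_left matrix_vector_mult_scaleR mult.assoc)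
  then show ?thesis
    by (simp add: shape_dist_def Sup_rotations_inner)
qed

lemma norm_mass_combination_le:
  assumes "\<forall>j\<in>{1..3}. m j \<ge> 0"
  shows "(norm (mass_combination m a t))\<^sup>2 \<le> (\<Sum>j\<in>{1..3}. m j * (t j)\<^sup>2) * total_moment m a"
proof -
  have "norm ((m j * t j) *\<^sub>R a j) = (sqrt (m j) * \<bar>t j\<bar>) * (sqrt (m j) * norm (a j))"
    if "j \<in> {1..3}" for j
  proof -
    have "(sqrt (m j) * \<bar>t j\<bar>) * (sqrt (m j) * norm (a j))
        = (sqrt (m j) * sqrt (m j)) * (\<bar>t j\<bar> * norm (a j))"
      by (simp only: mult_ac)
    then show ?thesis
      using assms that by (simp add: abs_mult)
  qed
  then have "norm (mass_combination m a t) \<le> (\<Sum>j\<in>{1..3}. (sqrt (m j) * \<bar>t j\<bar>) * (sqrt (m j) * norm (a j)))"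
    unfolding mass_combination_def by (metis (no_types, lifting) norm_sum sum.cong)
  then have "(norm (mass_combination m a t))\<^sup>2
      \<le> (\<Sum>j\<in>{1..3}. (sqrt (m j) * \<bar>t j\<bar>) * (sqrt (m j) * norm (a j)))\<^sup>2"
    by (simp add: power_mono)
  also have "\<dots> \<le> (\<Sum>j\<in>{1..3}. (sqrt (m j) * \<bar>t j\<bar>)\<^sup>2)
      * (\<Sum>j\<in>{1..3}. (sqrt (m j) * norm (a j))\<^sup>2)"
    by (rule Cauchy_Schwarz_ineq_sum)
  also have "\<dots> = (\<Sum>j\<in>{1..3}. m j * (t j)\<^sup>2) * total_moment m a"
    using assms by (simp add: total_moment_def moment_def power_mult_distrib)
  finally show ?thesis .
qed

lemma collinear_m_triangle_unit_iff:
  "collinear_m_triangle m b \<and> total_moment m b = 1 \<longleftrightarrow>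
    (\<exists>t u. norm u = 1 \<and> (\<forall>j\<in>{1..3}. b j = t j *\<^sub>R u) \<and>
       (\<Sum>j\<in>{1..3}. m j * t j) = 0 \<and> (\<Sum>j\<in>{1..3}. m j * (t j)\<^sup>2) = 1)"
proof -
  have line: "(\<Sum>j\<in>{1..3}. m j *\<^sub>R b j) = (\<Sum>j\<in>{1..3}. m j * t j) *\<^sub>R u \<and>
      total_moment m b = (\<Sum>j\<in>{1..3}. m j * (t j)\<^sup>2) * (norm u)\<^sup>2"
    if "\<forall>j\<in>{1..3}. b j = t j *\<^sub>R u" for t u
    using that by (simp add: total_moment_def moment_def scaleR_sum_left sum_distrib_right
        power_mult_distrib mult.assoc)
  show ?thesis
  proof
    assume b: "collinear_m_triangle m b \<and> total_moment m b = 1"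
    then obtain u t where bt: "\<forall>j\<in>{1..3}. b j = t j *\<^sub>R u"
      unfolding collinear_m_triangle_def by metis
    have "(\<Sum>j\<in>{1..3}. m j * (t j)\<^sup>2) * (norm u)\<^sup>2 = 1" "(\<Sum>j\<in>{1..3}. m j * t j) *\<^sub>R u = 0"
      using b line[OF bt] by (simp_all add: collinear_m_triangle_def m_triangle_def)
    moreover have "(\<Sum>j\<in>{1..3}. m j * (norm u * t j)\<^sup>2)
        = (norm u)\<^sup>2 * (\<Sum>j\<in>{1..3}. m j * (t j)\<^sup>2)"
      by (simp add: sum_distrib_left power_mult_distrib mult.left_commute)
    ultimately have "u \<noteq> 0" "(\<Sum>j\<in>{1..3}. m j * t j) = 0"
      "(\<Sum>j\<in>{1..3}. m j * (norm u * t j)\<^sup>2) = 1"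
      by (auto simp: mult.commute)
    moreover have "\<forall>j\<in>{1..3}. b j = (norm u * t j) *\<^sub>R (u /\<^sub>R norm u)"
      using bt \<open>u \<noteq> 0\<close> by simp
    ultimately show "\<exists>t u. norm u = 1 \<and> (\<forall>j\<in>{1..3}. b j = t j *\<^sub>R u) \<and>
       (\<Sum>j\<in>{1..3}. m j * t j) = 0 \<and> (\<Sum>j\<in>{1..3}. m j * (t j)\<^sup>2) = 1"
      by (intro exI[of _ "\<lambda>j. norm u * t j"] exI[of _ "u /\<^sub>R norm u"])
        (simp add: mult.left_commute[of _ "norm u"] flip: sum_distrib_left)
  next
    assume "\<exists>t u. norm u = 1 \<and> (\<forall>j\<in>{1..3}. b j = t j *\<^sub>R u) \<and>
       (\<Sum>j\<in>{1..3}. m j * t j) = 0 \<and> (\<Sum>j\<in>{1..3}. m j * (t j)\<^sup>2) = 1"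
    then obtain t u where "norm u = 1" "\<forall>j\<in>{1..3}. b j = t j *\<^sub>R u"
      "(\<Sum>j\<in>{1..3}. m j * t j) = 0" "(\<Sum>j\<in>{1..3}. m j * (t j)\<^sup>2) = 1"
      by blast
    with line[of t u] show "collinear_m_triangle m b \<and> total_moment m b = 1"
      unfolding collinear_m_triangle_def m_triangle_def by auto
  qed
qed

lemma arccos_eq_pi_div_4_iff:
  fixes x :: real
  assumes "0 \<le> x" "x \<le> 1"
  shows "arccos x = pi / 4 \<longleftrightarrow> x\<^sup>2 = 1 / 2"
proof -
  have "arccos (sqrt 2 / 2) = pi / 4"
    using arccos_cos[of "pi / 4"] by (simp add: cos_45)
  moreover have "\<bar>sqrt 2 / 2\<bar> \<le> (1::real)"
    by (simp add: real_sqrt_le_iff[of 2 4, simplified])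
  ultimately have "arccos x = pi / 4 \<longleftrightarrow> x = sqrt 2 / 2"
    using arccos_eq_iff[of x "sqrt 2 / 2"] assms by auto
  also have "\<dots> \<longleftrightarrow> x\<^sup>2 = 1 / 2"
    using assms power2_eq_iff_nonneg[of x "sqrt 2 / 2"] by (simp add: power_divide)
  finally show ?thesis .
qed

lemma hemisphere_center_iff_arccos:
  "hemisphere_center m a \<longleftrightarrow> total_moment m a = 1 \<and>
    (\<forall>t. (\<Sum>j\<in>{1..3}. m j * t j) = 0 \<and> (\<Sum>j\<in>{1..3}. m j * (t j)\<^sup>2) = 1 \<longrightarrow>
       arccos (norm (mass_combination m a t)) = pi / 4)"
proof -
  have "(\<forall>b. collinear_m_triangle m b \<and> total_moment m b = 1 \<longrightarrow> shape_dist m a b = pi / 4) \<longleftrightarrow>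
    (\<forall>t. (\<Sum>j\<in>{1..3}. m j * t j) = 0 \<and> (\<Sum>j\<in>{1..3}. m j * (t j)\<^sup>2) = 1 \<longrightarrow>
       arccos (norm (mass_combination m a t)) = pi / 4)"
  proof (intro iffI allI impI)
    fix t :: "nat \<Rightarrow> real"
    assume dist: "\<forall>b. collinear_m_triangle m b \<and> total_moment m b = 1 \<longrightarrow> shape_dist m a b = pi / 4"
      and t: "(\<Sum>j\<in>{1..3}. m j * t j) = 0 \<and> (\<Sum>j\<in>{1..3}. m j * (t j)\<^sup>2) = 1"
    let ?b = "\<lambda>j. t j *\<^sub>R (axis 1 1 :: real^3)"
    have "collinear_m_triangle m ?b \<and> total_moment m ?b = 1"
      unfolding collinear_m_triangle_unit_iff using t by (intro exI[of _ t] exI[of _ "axis 1 1"]) simp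
    with dist have "shape_dist m a ?b = pi / 4" by blast
    then show "arccos (norm (mass_combination m a t)) = pi / 4"
      using shape_dist_collinear[of ?b t "axis 1 1" m a] by simp
  next
    fix b
    assume quarter: "\<forall>t. (\<Sum>j\<in>{1..3}. m j * t j) = 0 \<and> (\<Sum>j\<in>{1..3}. m j * (t j)\<^sup>2) = 1 \<longrightarrow>
       arccos (norm (mass_combination m a t)) = pi / 4"
      and "collinear_m_triangle m b \<and> total_moment m b = 1"
    then obtain t u where tu: "norm u = 1" "\<forall>j\<in>{1..3}. b j = t j *\<^sub>R u"
      "(\<Sum>j\<in>{1..3}. m j * t j) = 0" "(\<Sum>j\<in>{1..3}. m j * (t j)\<^sup>2) = 1"
      unfolding collinear_m_triangle_unit_iff by blast
    with quarter show "shape_dist m a b = pi / 4"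
      using shape_dist_collinear[OF tu(2)] by simp
  qed
  then show ?thesis
    unfolding hemisphere_center_def by blast
qed

lemma hemisphere_center_iff_norm_mass_combination:
  assumes "\<forall>j\<in>{1..3}. m j > 0" and "total_moment m a = 1"
  shows "hemisphere_center m a \<longleftrightarrow>
    (\<forall>t. (\<Sum>j\<in>{1..3}. m j * t j) = 0 \<longrightarrow>
       (norm (mass_combination m a t))\<^sup>2 = (\<Sum>j\<in>{1..3}. m j * (t j)\<^sup>2) / 2)"
proof -
  \<comment> \<open>Cauchy-Schwarz keeps the argument in [0, 1], outside of which arccos is unspecified.\<close>
  have arccos: "arccos (norm (mass_combination m a t)) = pi / 4 \<longleftrightarrow>
      (norm (mass_combination m a t))\<^sup>2 = 1 / 2"
    if "(\<Sum>j\<in>{1..3}. m j * (t j)\<^sup>2) = 1" for t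
    using norm_mass_combination_le[of m a t] assms that
    by (intro arccos_eq_pi_div_4_iff) (auto simp: less_imp_le power_le_one_iff)
  have "(norm (mass_combination m a t))\<^sup>2 = (\<Sum>j\<in>{1..3}. m j * (t j)\<^sup>2) / 2"
    if unit: "\<forall>t. (\<Sum>j\<in>{1..3}. m j * t j) = 0 \<and> (\<Sum>j\<in>{1..3}. m j * (t j)\<^sup>2) = 1 \<longrightarrow>
       (norm (mass_combination m a t))\<^sup>2 = 1 / 2"
      and centred: "(\<Sum>j\<in>{1..3}. m j * t j) = 0" for t
  proof (cases "(\<Sum>j\<in>{1..3}. m j * (t j)\<^sup>2) = 0")
    case True
    then have "\<forall>j\<in>{1..3}. t j = 0"
      using assms(1) by (subst (asm) sum_nonneg_eq_0_iff) (force simp: less_imp_le)+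
    with True show ?thesis
      by (simp add: mass_combination_def)
  next
    case False
    define c where "c = sqrt (\<Sum>j\<in>{1..3}. m j * (t j)\<^sup>2)"
    have "(\<Sum>j\<in>{1..3}. m j * (t j)\<^sup>2) \<ge> 0"
      using assms(1) by (auto intro: sum_nonneg simp: less_imp_le)
    with False have c: "c > 0" "c\<^sup>2 = (\<Sum>j\<in>{1..3}. m j * (t j)\<^sup>2)"
      by (simp_all add: c_def)
    have "(\<Sum>j\<in>{1..3}. m j * (t j / c)) = 0" "(\<Sum>j\<in>{1..3}. m j * (t j / c)\<^sup>2) = 1"
      using centred c False by (simp_all add: power_divide flip: sum_divide_distrib)
    then have "(norm (mass_combination m a (\<lambda>j. t j / c)))\<^sup>2 = 1 / 2"
      using unit[rule_format, of "\<lambda>j. t j / c"] by blast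
    moreover have "mass_combination m a (\<lambda>j. t j / c) = (1 / c) *\<^sub>R mass_combination m a t"
      using mass_combination_scale[of m a "1 / c" t] by simp
    ultimately show ?thesis
      using c by (simp add: field_simps)
  qed
  then show ?thesis
    unfolding hemisphere_center_iff_arccos using assms(2) arccos by auto
qed

lemma moment_eq_dual_mass_if_norm_mass_combination:
  assumes "(\<Sum>j\<in>{1..3}. m j) = 1" and "m_triangle m a" and "i \<in> {1..3}" and "m i > 0"
    and "\<forall>t. (\<Sum>j\<in>{1..3}. m j * t j) = 0 \<longrightarrow>
       (norm (mass_combination m a t))\<^sup>2 = (\<Sum>j\<in>{1..3}. m j * (t j)\<^sup>2) / 2"
  shows "moment m a i = (1 - m i) / 2"
proof -
  let ?R = "{1..3} - {i}"
  define t where "t j = (if j = i then 1 else 0) - m i" for j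
  have split: "(\<Sum>j\<in>{1..3}. f j) = f i + (\<Sum>j\<in>?R. f j)" for f :: "nat \<Rightarrow> 'b::comm_monoid_add"
    using assms(3) by (simp add: sum.remove)
  have R: "(\<Sum>j\<in>?R. m j) = 1 - m i" "(\<Sum>j\<in>?R. m j *\<^sub>R a j) = - (m i *\<^sub>R a i)"
    using assms(1,2) unfolding split m_triangle_def by (simp_all add: algebra_simps eq_neg_iff_add_eq_0)
  have t: "t i = 1 - m i" "\<And>j. j \<in> ?R \<Longrightarrow> t j = - m i"
    by (auto simp: t_def)
  have "(\<Sum>j\<in>{1..3}. m j * t j) = 0"
    unfolding split using R t by (simp add: sum_negf flip: sum_distrib_right)
  moreover have "(\<Sum>j\<in>{1..3}. m j * (t j)\<^sup>2) = m i * (1 - m i)"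
    unfolding split using R t by (simp flip: sum_distrib_right) (simp add: power2_eq_square algebra_simps)
  moreover have "mass_combination m a t = m i *\<^sub>R a i"
  proof -
    have "(\<Sum>j\<in>?R. (m j * t j) *\<^sub>R a j) = - m i *\<^sub>R (\<Sum>j\<in>?R. m j *\<^sub>R a j)"
      using t by (simp add: scaleR_sum_right mult.commute)
    then show ?thesis
      unfolding mass_combination_def split using R t by (simp add: right_diff_distrib scaleR_diff_left)
  qed
  ultimately have "(norm (m i *\<^sub>R a i))\<^sup>2 = m i * ((1 - m i) / 2)"
    using assms(5)[rule_format, of t] by simp
  moreover have "(norm (m i *\<^sub>R a i))\<^sup>2 = m i * moment m a i"
    by (simp add: moment_def power_mult_distrib power2_eq_square)
  ultimately have "m i * moment m a i = m i * ((1 - m i) / 2)"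
    by simp
  then show ?thesis
    using assms(4) by simp
qed

lemma inner_eq_neg_half_if_moment_eq_dual_mass:
  assumes "admissible_masses m" and "m_triangle m a"
    and "\<forall>j\<in>{1..3}. moment m a j = (1 - m j) / 2"
  shows "a 1 \<bullet> a 2 = - 1 / 2" "a 1 \<bullet> a 3 = - 1 / 2" "a 2 \<bullet> a 3 = - 1 / 2"
proof -
  note m = admissible_massesD[OF assms(1)]
  have diag: "m 1 * (a 1 \<bullet> a 1) = (m 2 + m 3) / 2" "m 2 * (a 2 \<bullet> a 2) = (m 1 + m 3) / 2"
    "m 3 * (a 3 \<bullet> a 3) = (m 1 + m 2) / 2"
    using assms(3) m(4) by (auto simp: moment_def power2_norm_eq_inner)
  have centre: "m 1 *\<^sub>R a 1 + m 2 *\<^sub>R a 2 + m 3 *\<^sub>R a 3 = 0"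
    using assms(2) unfolding m_triangle_def sum_1_to_3 .
  have row: "m 1 * (a i \<bullet> a 1) + m 2 * (a i \<bullet> a 2) + m 3 * (a i \<bullet> a 3) = 0" for i
    using arg_cong[OF centre, of "inner (a i)"] by (simp add: inner_add_right)
  define h12 h13 h23 where "h12 = a 1 \<bullet> a 2 + 1 / 2" and "h13 = a 1 \<bullet> a 3 + 1 / 2"
    and "h23 = a 2 \<bullet> a 3 + 1 / 2"
  have h: "m 2 * h12 + m 3 * h13 = 0" "m 1 * h12 + m 3 * h23 = 0" "m 1 * h13 + m 2 * h23 = 0"
    using row[of 1] row[of 2] row[of 3] diag inner_commute[of "a 2" "a 1"]
      inner_commute[of "a 3" "a 1"] inner_commute[of "a 3" "a 2"]
    unfolding h12_def h13_def h23_def by (simp_all add: algebra_simps add_divide_distrib)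
  have "2 * m 1 * m 2 * h12 = m 1 * (m 2 * h12 + m 3 * h13) + m 2 * (m 1 * h12 + m 3 * h23)
      - m 3 * (m 1 * h13 + m 2 * h23)"
    by (simp add: algebra_simps)
  with h m have "h12 = 0"
    by simp
  with h m have "h13 = 0" "h23 = 0"
    by simp_all
  with \<open>h12 = 0\<close> show "a 1 \<bullet> a 2 = - 1 / 2" "a 1 \<bullet> a 3 = - 1 / 2" "a 2 \<bullet> a 3 = - 1 / 2"
    by (simp_all add: h12_def h13_def h23_def)
qed

lemma norm_mass_combination_if_moment_eq_dual_mass:
  assumes "admissible_masses m" and "m_triangle m a"
    and "\<forall>j\<in>{1..3}. moment m a j = (1 - m j) / 2"
  shows "(norm (mass_combination m a t))\<^sup>2
    = (\<Sum>j\<in>{1..3}. m j * (t j)\<^sup>2) / 2 - (\<Sum>j\<in>{1..3}. m j * t j)\<^sup>2 / 2"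
proof -
  note m = admissible_massesD[OF assms(1)]
  note off = inner_eq_neg_half_if_moment_eq_dual_mass[OF assms]
  have gram: "a 2 \<bullet> a 1 = - 1 / 2" "a 3 \<bullet> a 1 = - 1 / 2" "a 3 \<bullet> a 2 = - 1 / 2"
    "a 1 \<bullet> a 1 = (1 - m 1) / (2 * m 1)" "a 2 \<bullet> a 2 = (1 - m 2) / (2 * m 2)"
    "a 3 \<bullet> a 3 = (1 - m 3) / (2 * m 3)"
    using off m assms(3)[rule_format, of 1] assms(3)[rule_format, of 2] assms(3)[rule_format, of 3]
    by (auto simp: inner_commute moment_def power2_norm_eq_inner field_simps)
  show ?thesis
    using m off gram unfolding mass_combination_def sum_1_to_3 power2_norm_eq_inner
    by (simp add: inner_add_left inner_add_right) (simp add: field_simps power2_eq_square)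
qed

lemma hemisphere_center_iff_moment_eq_dual_mass:
  assumes "admissible_masses m" and "m_triangle m a" and "total_moment m a = 1"
  shows "hemisphere_center m a \<longleftrightarrow> (\<forall>j\<in>{1..3}. moment m a j = (1 - m j) / 2)"
proof -
  have pos: "\<forall>j\<in>{1..3}. m j > 0"
    using assms(1) by (simp add: admissible_masses_def)
  show ?thesis
  proof
    assume "hemisphere_center m a"
    then show "\<forall>j\<in>{1..3}. moment m a j = (1 - m j) / 2"
      using assms pos moment_eq_dual_mass_if_norm_mass_combination[of m a]
      by (simp add: hemisphere_center_iff_norm_mass_combination admissible_masses_def)
  next
    assume "\<forall>j\<in>{1..3}. moment m a j = (1 - m j) / 2"
    then show "hemisphere_center m a"
      using assms pos norm_mass_combination_if_moment_eq_dual_mass[of m a]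
      by (simp add: hemisphere_center_iff_norm_mass_combination)
  qed
qed

lemma dual_mass_triangle_exists:
  assumes "admissible_masses m"
  obtains a n where "oriented_m_triangle m a n" and "cross3 (a 1) (a 2) \<bullet> n > 0"
    and "\<forall>j\<in>{1..3}. moment m a j = (1 - m j) / 2"
proof -
  define r where "r j = sqrt (m j)" for j
  define e :: "nat \<Rightarrow> real^3" where "e j = axis (if j = 1 then 1 else if j = 2 then 2 else 3) 1" for j
  define n where "n = (\<Sum>j\<in>{1..3}. r j *\<^sub>R e j)"
  define a where "a j = (1 / sqrt 2) *\<^sub>R ((1 / r j) *\<^sub>R e j - n)" for j
  have m: "m j > 0" if "j \<in> {1..3}" for j
    using assms that by (simp add: admissible_masses_def)
  have r: "r j > 0" "m j / r j = r j" "r j * r j = m j" if "j \<in> {1..3}" for j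
    using m[OF that] by (simp_all add: r_def real_div_sqrt less_imp_le)
  have ee: "e j \<bullet> e j = 1" for j
    by (simp add: e_def)
  have en: "e j \<bullet> n = r j" if "j \<in> {1..3}" for j
  proof -
    from that have "j = 1 \<or> j = 2 \<or> j = 3"
      by auto
    then show ?thesis
      unfolding n_def sum_1_to_3 by (auto simp: e_def inner_add_right inner_axis_axis)
  qed
  have nn: "n \<bullet> n = 1"
  proof -
    have "n \<bullet> n = (\<Sum>j\<in>{1..3}. r j * (e j \<bullet> n))"
      by (simp add: n_def inner_sum_left)
    also have "\<dots> = (\<Sum>j\<in>{1..3}. m j)"
      using en r by simp
    also have "\<dots> = 1"
      using assms by (simp add: admissible_masses_def)
    finally show ?thesis .
  qed
  have "(\<Sum>j\<in>{1..3}. m j *\<^sub>R a j)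
      = (1 / sqrt 2) *\<^sub>R ((\<Sum>j\<in>{1..3}. (m j / r j) *\<^sub>R e j) - (\<Sum>j\<in>{1..3}. m j) *\<^sub>R n)"
    by (simp add: a_def scaleR_diff_right sum_subtractf scaleR_sum_right scaleR_sum_left)
  also have "\<dots> = 0"
    using r assms by (simp add: n_def admissible_masses_def)
  finally have centred: "m_triangle m a"
    by (simp add: m_triangle_def)
  have normal: "a j \<bullet> n = 0" if "j \<in> {1..3}" for j
    using en[OF that] r[OF that] nn by (simp add: a_def inner_diff_left)
  have "norm n = 1"
    using nn by (simp add: norm_eq_sqrt_inner)
  have moments: "moment m a j = (1 - m j) / 2" if "j \<in> {1..3}" for j
  proof -
    have "a j \<bullet> a j = (1 / 2) * ((1 / r j) * (1 / r j) - 2 * ((1 / r j) * r j) + 1)"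
      using en[OF that] ee nn
      by (simp add: a_def inner_commute[of n "e j"] algebra_simps)
    then show ?thesis
      using r[OF that] m[OF that] by (simp add: moment_def power2_norm_eq_inner field_simps)
  qed
  have orientation: "cross3 (a 1) (a 2) \<bullet> n = r 3 / (2 * (r 1 * r 2))"
  proof -
    have "cross3 ((1 / r 1) *\<^sub>R e 1 - n) ((1 / r 2) *\<^sub>R e 2 - n) \<bullet> n
        = (1 / r 1) * (1 / r 2) * (cross3 (e 1) (e 2) \<bullet> n)"
      by (simp add: Cross3.left_diff_distrib Cross3.right_diff_distrib cross_mult_left cross_mult_right
          inner_diff_left dot_cross_self)
    moreover have "cross3 (e 1) (e 2) = e 3"
      by (simp add: e_def cross_basis)
    ultimately show ?thesis
      using en[of 3] by (simp add: a_def cross_mult_left cross_mult_right)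
  qed
  show ?thesis
  proof (rule that)
    show "oriented_m_triangle m a n"
      using centred normal \<open>norm n = 1\<close> by (simp add: oriented_m_triangle_def)
    show "cross3 (a 1) (a 2) \<bullet> n > 0"
      using orientation r(1)[of 1] r(1)[of 2] r(1)[of 3] by simp
  qed (use moments in blast)
qed

theorem mainTheorem14:
  fixes m :: "nat \<Rightarrow> real"
  assumes "admissible_masses m"
  shows "(\<exists>a n. pos_oriented m a n \<and> (\<forall>j\<in>{1..3}. moment m a j = (1 - m j) / 2))
       \<and> (\<forall>a n. pos_oriented m a n \<and> total_moment m a = 1 \<longrightarrow>
              (hemisphere_center m a \<longleftrightarrow> (\<forall>j\<in>{1..3}. moment m a j = (1 - m j) / 2)))
       \<and> (\<exists>a n. neg_oriented m a n \<and> (\<forall>j\<in>{1..3}. moment m a j = (1 - m j) / 2))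
       \<and> (\<forall>a n. neg_oriented m a n \<and> total_moment m a = 1 \<longrightarrow>
              (hemisphere_center m a \<longleftrightarrow> (\<forall>j\<in>{1..3}. moment m a j = (1 - m j) / 2)))"
proof -
  obtain a n where a: "oriented_m_triangle m a n" "cross3 (a 1) (a 2) \<bullet> n > 0"
    and dual: "\<forall>j\<in>{1..3}. moment m a j = (1 - m j) / 2"
    using dual_mass_triangle_exists[OF assms] .
  have "pos_oriented m a n" "neg_oriented m a (- n)"
    using a by (auto simp: pos_oriented_def neg_oriented_def oriented_m_triangle_def)
  moreover have "hemisphere_center m b \<longleftrightarrow> (\<forall>j\<in>{1..3}. moment m b j = (1 - m j) / 2)"
    if "oriented_m_triangle m b k" and "total_moment m b = 1" for b k
    using hemisphere_center_iff_moment_eq_dual_mass[OF assms] that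
    by (simp add: oriented_m_triangle_def)
  ultimately show ?thesis
    using dual unfolding pos_oriented_def neg_oriented_def by blast
qed

end
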